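(* Let $\alpha,\beta,\gamma\ge0$ with $\alpha(\beta+\gamma)>0$. Then for every $\theta\in(0,2\pi)$ both roots $\lambda\in\mathbb C$ of $$\lambda^2+\gamma\lambda+\beta\lambda(1-e^{i\theta})+\alpha(2-e^{i\theta}-e^{-i\theta})=0$$ have strictly negative real part.
   Context: This is the characteristic equation of the linearised car-following system $\ddot s_n=-\gamma\dot s_n+\beta(\dot s_{n+1}-\dot s_n)+\alpha(s_{n+1}-2s_n+s_{n-1})$ on a ring (optimal velocity function constant), obtained from the ansatz $s_n=\xi e^{\lambda t}e^{in\theta}$. *)

theory Defs
  imports Complex_Main
begin

end

theory Submission
  imports Defs
begin

text \<open>With \<open>e = exp (\<i> t)\<close> the equation reads \<open>z\<^sup>2 + (p + \<i> q) z + r = 0\<close> with real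
  \<open>p = c + b (1 - cos t) > 0\<close>, \<open>q = - b sin t\<close> and \<open>r = 2 a (1 - cos t) > 0\<close>.
  For such a quadratic, writing \<open>z = x + \<i> y\<close> and eliminating \<open>y\<close> between the real and
  imaginary parts gives \<open>(2x + p)\<^sup>2 (x\<^sup>2 + p x + r) = - q\<^sup>2 x (x + p)\<close>, which is
  impossible for \<open>x \<ge> 0\<close>, since then the left side is positive and the right side is not.\<close>

lemma quadratic_root_Re_neg:
  fixes p q r :: real and z :: complex
  assumes "p > 0" and "r > 0"
    and "z\<^sup>2 + Complex p q * z + of_real r = 0"
  shows "Re z < 0"
proof (rule ccontr)
  define x y where "x = Re z" and "y = Im z"
  assume "\<not> Re z < 0"
  then have "x \<ge> 0" by (simp add: x_def)
  have "Complex (x*x - y*y + p*x - q*y + r) (2*x*y + p*y + q*x) = 0"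
    using assms(3) complex_surj[of z]
    by (simp add: x_def y_def power2_eq_square complex_eq_iff algebra_simps)
  then have re: "x*x - y*y + p*x - q*y + r = 0" and im: "(2*x + p) * y = - q * x"
    by (simp_all add: complex_eq_iff algebra_simps)
  have "(2*x + p)\<^sup>2 * (x*x + p*x + r) = ((2*x + p) * y) * ((2*x + p) * y + (2*x + p) * q)"
    using re by (simp add: power2_eq_square algebra_simps)
  also have "\<dots> = - (q*q) * (x * (x + p))"
    using im by (simp add: algebra_simps)
  also have "\<dots> \<le> 0"
    using \<open>x \<ge> 0\<close> \<open>p > 0\<close> by simp
  finally have "(2*x + p)\<^sup>2 * (x*x + p*x + r) \<le> 0" .
  moreover have "(2*x + p)\<^sup>2 * (x*x + p*x + r) > 0"
    using \<open>x \<ge> 0\<close> assms(1,2) by (intro mult_pos_pos) (simp_all add: add_nonneg_pos)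
  ultimately show False by simp
qed

lemma cos_less_one:
  assumes "0 < t" and "t < 2 * pi"
  shows "cos t < 1"
proof -
  have "sin (t / 2) > 0"
    using assms by (intro sin_gt_zero) simp_all
  moreover have "cos t = 1 - 2 * (sin (t / 2))\<^sup>2"
    using cos_double_sin[of "t / 2"] by simp
  ultimately show ?thesis by simp
qed

theorem mainTheorem7:
  fixes a b c t :: real and z :: complex
  assumes "a \<ge> 0" and "b \<ge> 0" and "c \<ge> 0"
    and "a * (b + c) > 0"
    and "0 < t" and "t < 2 * pi"
    and "z\<^sup>2 + of_real c * z + of_real b * z * (1 - exp (\<i> * of_real t))
          + of_real a * (2 - exp (\<i> * of_real t) - exp (- (\<i> * of_real t))) = 0"
  shows "Re z < 0"
proof (rule quadratic_root_Re_neg)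
  have "cos t < 1" using assms(5,6) by (rule cos_less_one)
  have "a > 0" "b + c > 0"
    using assms(1-4) by (auto simp: zero_less_mult_iff)
  show "c + b * (1 - cos t) > 0"
    using \<open>cos t < 1\<close> \<open>b + c > 0\<close> assms(2,3)
    by (smt (verit) mult_nonneg_nonneg mult_pos_pos)
  show "2 * a * (1 - cos t) > 0"
    using \<open>cos t < 1\<close> \<open>a > 0\<close> by simp
  have "exp (\<i> * of_real t) = Complex (cos t) (sin t)"
    and "exp (- (\<i> * of_real t)) = Complex (cos t) (- sin t)"
    by (simp_all add: exp_eq_polar cis.ctr)
  with assms(7) show "z\<^sup>2 + Complex (c + b * (1 - cos t)) (- b * sin t) * z
      + of_real (2 * a * (1 - cos t)) = 0"
    by (simp add: complex_eq_iff algebra_simps power2_eq_square)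
qed

end
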